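(* Let $(K,\mathrm{val})$ be a valued field in which every strict unit admits a square root in $K$. Then $(K,\mathrm{val})$ admits a pseudo-angular component map $\mathrm{p.an}:K^\times\to F^\times$.
   Context: Let $(G,\le)$ be a totally ordered abelian group written multiplicatively with identity $e$, and $G^2=\{g^2: g\in G\}$. Let $(K,\mathrm{val})$ be a valued field with surjective valuation $\mathrm{val}:K\to G\cup\{\infty\}$, valuation ring $B=\{x\in K:\mathrm{val}(x)\ge e\}$ (so $B^\times=\{x:\mathrm{val}(x)=e\}$), residue map $\pi:B\to F$ and residue field $F$. A strict unit is an element $x\in B^\times$ with $\pi(x)=1$. For $g\in G$, $\overline g$ denotes its class in $G/G^2$. A pseudo-angular component map is a map $\mathrm{p.an}:K^\times\to F^\times$ such that: (1) $\mathrm{p.an}(u)=\pi(u)$ for all $u\in B^\times$; (2) $\mathrm{p.an}(ux)=\pi(u)\mathrm{p.an}(x)$ for all $u\in B^\times$, $x\in K^\times$; (3) for every $g\in G$ and $c\in F^\times$ there is $w\in K$ with $\mathrm{val}(w)=g$ and $\mathrm{p.an}(w)=c$; (4) for nonzero $x_1,x_2\in K$ with $x_1+x_2\ne0$: if $\mathrm{val}(x_1)<\mathrm{val}(x_2)$ then $\mathrm{p.an}(x_1+x_2)=\mathrm{p.an}(x_1)$; if $\mathrm{val}(x_1)=\mathrm{val}(x_2)$ and $\mathrm{p.an}(x_1)+\mathrm{p.an}(x_2)\neq0$ then $\mathrm{val}(x_1+x_2)=\mathrm{val}(x_1)$ and $\mathrm{p.an}(x_1+x_2)=\mathrm{p.an}(x_1)+\mathrm{p.an}(x_2)$;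 (5) for $x,y\in K^\times$ with $\overline{\mathrm{val}(x)}=\overline{\mathrm{val}(y)}$ and $\mathrm{p.an}(x)=\mathrm{p.an}(y)$ there is $u\in K^\times$ with $y=u^2x$; (6) for all $a,u\in K^\times$ there is $k\in F^\times$ with $\mathrm{p.an}(au^2)=\mathrm{p.an}(a)k^2$. *)

theory Defs
  imports Main
begin

text \<open>The value group G is written additively (class linordered_ab_group_add);
  the valuation is only meaningful on nonzero elements (val 0 = infinity is
  encoded by treating 0 separately).\<close>

definition valuation :: "('k::field \<Rightarrow> 'g::linordered_ab_group_add) \<Rightarrow> bool" where
  "valuation val \<longleftrightarrow>
     (\<forall>x y. x \<noteq> 0 \<and> y \<noteq> 0 \<longrightarrow> val (x * y) = val x + val y) \<and>
     (\<forall>x y. x \<noteq> 0 \<and> y \<noteq> 0 \<and> x + y \<noteq> 0 \<longrightarrow> min (val x) (val y) \<le> val (x + y)) \<and>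
     (\<forall>g. \<exists>x. x \<noteq> 0 \<and> val x = g)"

definition val_ring :: "('k::field \<Rightarrow> 'g::linordered_ab_group_add) \<Rightarrow> 'k set" where
  "val_ring val = {x. x = 0 \<or> 0 \<le> val x}"

definition val_unit :: "('k::field \<Rightarrow> 'g::linordered_ab_group_add) \<Rightarrow> 'k \<Rightarrow> bool" where
  "val_unit val u \<longleftrightarrow> u \<noteq> 0 \<and> val u = 0"

definition residue_map ::
  "('k::field \<Rightarrow> 'g::linordered_ab_group_add) \<Rightarrow> ('k \<Rightarrow> 'f::field) \<Rightarrow> bool" where
  "residue_map val pi \<longleftrightarrow>
     (\<forall>x\<in>val_ring val. \<forall>y\<in>val_ring val. pi (x + y) = pi x + pi y \<and> pi (x * y) = pi x * pi y) \<and>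
     pi 1 = 1 \<and>
     pi ` val_ring val = UNIV \<and>
     (\<forall>x\<in>val_ring val. pi x = 0 \<longleftrightarrow> (x = 0 \<or> 0 < val x))"

definition valued_field ::
  "('k::field \<Rightarrow> 'g::linordered_ab_group_add) \<Rightarrow> ('k \<Rightarrow> 'f::field) \<Rightarrow> bool" where
  "valued_field val pi \<longleftrightarrow> valuation val \<and> residue_map val pi"

definition strict_unit ::
  "('k::field \<Rightarrow> 'g::linordered_ab_group_add) \<Rightarrow> ('k \<Rightarrow> 'f::field) \<Rightarrow> 'k \<Rightarrow> bool" where
  "strict_unit val pi u \<longleftrightarrow> val_unit val u \<and> pi u = 1"

definition pseudo_angular_component ::
  "('k::field \<Rightarrow> 'g::linordered_ab_group_add) \<Rightarrow> ('k \<Rightarrow> 'f::field) \<Rightarrow> ('k \<Rightarrow> 'f) \<Rightarrow> bool" where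
  "pseudo_angular_component val pi p \<longleftrightarrow>
     (\<forall>x. x \<noteq> 0 \<longrightarrow> p x \<noteq> 0) \<and>
     (\<forall>u. val_unit val u \<longrightarrow> p u = pi u) \<and>
     (\<forall>u x. val_unit val u \<and> x \<noteq> 0 \<longrightarrow> p (u * x) = pi u * p x) \<and>
     (\<forall>g c. c \<noteq> 0 \<longrightarrow> (\<exists>w. w \<noteq> 0 \<and> val w = g \<and> p w = c)) \<and>
     (\<forall>x1 x2. x1 \<noteq> 0 \<and> x2 \<noteq> 0 \<and> x1 + x2 \<noteq> 0 \<longrightarrow>
        (val x1 < val x2 \<longrightarrow> p (x1 + x2) = p x1) \<and>
        (val x1 = val x2 \<and> p x1 + p x2 \<noteq> 0 \<longrightarrow>
           val (x1 + x2) = val x1 \<and> p (x1 + x2) = p x1 + p x2)) \<and>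
     (\<forall>x y. x \<noteq> 0 \<and> y \<noteq> 0 \<and> (\<exists>g. val x - val y = g + g) \<and> p x = p y \<longrightarrow>
        (\<exists>u. u \<noteq> 0 \<and> y = u\<^sup>2 * x)) \<and>
     (\<forall>a u. a \<noteq> 0 \<and> u \<noteq> 0 \<longrightarrow> (\<exists>k. k \<noteq> 0 \<and> p (a * u\<^sup>2) = p a * k\<^sup>2))"

end

theory Submission
  imports Defs
begin

text \<open>Pick a representative \<open>t\<close> of each class of \<open>G/2G\<close> and, for a value \<open>g = t + 2h\<close>, put
  \<open>s g = w t * (w h)\<^sup>2\<close> with \<open>w h\<close> any element of value \<open>h\<close>. The map \<open>p.an x = \<pi> (x / s (val x))\<close>
  inherits additivity on elements of equal value from the residue map, since they are divided
  by the same \<open>s g\<close>. When \<open>g - h \<in> 2G\<close>, the ratio \<open>s g / s h\<close> is a square; so two elements with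
  values in the same class and the same \<open>p.an\<close> differ by a square times a strict unit, and
  that strict unit is a square by hypothesis.\<close>

definition square_class :: "'g::ab_group_add \<Rightarrow> 'g set" where
  "square_class g = {r. \<exists>c. g - r = c + c}"

lemma square_class_self: "g \<in> square_class g"
  by (auto simp: square_class_def intro: exI[of _ 0])

lemma square_class_eq:
  assumes "g - h = d + d"
  shows "square_class g = square_class h"
proof -
  have "(\<exists>c. g - r = c + c) \<longleftrightarrow> (\<exists>c. h - r = c + c)" for r
  proof
    assume "\<exists>c. g - r = c + c"
    then obtain c where "g - r = c + c" by blast
    with assms have "h - r = (c - d) + (c - d)" by (simp add: algebra_simps)
    then show "\<exists>c. h - r = c + c" by blast
  next
    assume "\<exists>c. h - r = c + c"
    then obtain c where "h - r = c + c" by blast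
    with assms have "g - r = (c + d) + (c + d)" by (simp add: algebra_simps)
    then show "\<exists>c. g - r = c + c" by blast
  qed
  then show ?thesis by (simp add: square_class_def)
qed

text \<open>The class \<open>2G\<close> is represented by \<open>0\<close>, so that the section below sends \<open>0\<close> to \<open>1\<close>.\<close>

definition class_rep :: "'g::ab_group_add \<Rightarrow> 'g" where
  "class_rep g = (if 0 \<in> square_class g then 0 else SOME r. r \<in> square_class g)"

lemma class_rep_in_square_class: "class_rep g \<in> square_class g"
  using square_class_self[of g] by (auto simp: class_rep_def intro: someI)

lemma class_rep_0 [simp]: "class_rep 0 = 0"
  by (simp add: class_rep_def square_class_self)

lemma class_rep_eq: "g - h = d + d \<Longrightarrow> class_rep g = class_rep h"
  by (simp add: class_rep_def square_class_eq)

locale vfield =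
  fixes val :: "'k::field \<Rightarrow> 'g::linordered_ab_group_add"
    and pi :: "'k \<Rightarrow> 'f::field"
  assumes valued_field: "valued_field val pi"
begin

lemma val_mult: "x \<noteq> 0 \<Longrightarrow> y \<noteq> 0 \<Longrightarrow> val (x * y) = val x + val y"
  using valued_field by (simp add: valued_field_def valuation_def)

lemma val_add: "x \<noteq> 0 \<Longrightarrow> y \<noteq> 0 \<Longrightarrow> x + y \<noteq> 0 \<Longrightarrow> min (val x) (val y) \<le> val (x + y)"
  using valued_field by (simp add: valued_field_def valuation_def)

lemma val_surj: "\<exists>x. x \<noteq> 0 \<and> val x = g"
  using valued_field by (simp add: valued_field_def valuation_def)

lemma res_add: "x \<in> val_ring val \<Longrightarrow> y \<in> val_ring val \<Longrightarrow> pi (x + y) = pi x + pi y"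
  using valued_field by (simp add: valued_field_def residue_map_def)

lemma res_mult: "x \<in> val_ring val \<Longrightarrow> y \<in> val_ring val \<Longrightarrow> pi (x * y) = pi x * pi y"
  using valued_field by (simp add: valued_field_def residue_map_def)

lemma res_1 [simp]: "pi 1 = 1"
  using valued_field by (simp add: valued_field_def residue_map_def)

lemma res_surj: "\<exists>x\<in>val_ring val. pi x = c"
  using valued_field unfolding valued_field_def residue_map_def by (metis UNIV_I imageE)

lemma res_eq_0_iff: "x \<in> val_ring val \<Longrightarrow> pi x = 0 \<longleftrightarrow> x = 0 \<or> 0 < val x"
  using valued_field by (simp add: valued_field_def residue_map_def)

lemma val_1 [simp]: "val 1 = 0"
  using val_mult[of 1 1] by simp

lemma val_inverse: "x \<noteq> 0 \<Longrightarrow> val (inverse x) = - val x"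
  using val_mult[of x "inverse x"] by (simp add: eq_neg_iff_add_eq_0 add.commute)

lemma val_divide: "x \<noteq> 0 \<Longrightarrow> y \<noteq> 0 \<Longrightarrow> val (x / y) = val x - val y"
  by (simp add: divide_inverse val_mult val_inverse)

lemma val_power2: "x \<noteq> 0 \<Longrightarrow> val (x\<^sup>2) = val x + val x"
  by (simp add: power2_eq_square val_mult)

lemma val_unit_in_val_ring: "val_unit val u \<Longrightarrow> u \<in> val_ring val"
  by (simp add: val_unit_def val_ring_def)

lemma val_unit_mult: "val_unit val u \<Longrightarrow> val_unit val v \<Longrightarrow> val_unit val (u * v)"
  by (simp add: val_unit_def val_mult)

lemma res_mult_val_unit: "val_unit val u \<Longrightarrow> val_unit val v \<Longrightarrow> pi (u * v) = pi u * pi v"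
  by (simp add: res_mult val_unit_in_val_ring)

lemma val_unit_iff_res_nonzero: "x \<in> val_ring val \<Longrightarrow> val_unit val x \<longleftrightarrow> pi x \<noteq> 0"
  by (auto simp: val_unit_def val_ring_def res_eq_0_iff)

lemma val_ring_add:
  assumes "a \<in> val_ring val" "b \<in> val_ring val"
  shows "a + b \<in> val_ring val"
proof (cases "a = 0 \<or> b = 0 \<or> a + b = 0")
  case False
  then have "min (val a) (val b) \<le> val (a + b)" by (blast intro: val_add)
  with False assms show ?thesis by (auto simp: val_ring_def min_le_iff_disj)
qed (use assms in \<open>auto simp: val_ring_def\<close>)

lemma res_add_val_unit:
  assumes "a \<in> val_ring val" "b \<in> val_ring val" "pi a + pi b \<noteq> 0"
  shows "val_unit val (a + b) \<and> pi (a + b) = pi a + pi b"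
  using assms val_ring_add[OF assms(1,2)] val_unit_iff_res_nonzero res_add by simp

lemma strict_unit_1_plus: "z \<in> val_ring val \<Longrightarrow> pi z = 0 \<Longrightarrow> strict_unit val pi (1 + z)"
  using res_add_val_unit[of 1 z] by (simp add: strict_unit_def val_ring_def)

lemma res_lift: "c \<noteq> 0 \<Longrightarrow> \<exists>b. val_unit val b \<and> pi b = c"
  using res_surj[of c] val_unit_iff_res_nonzero by blast

definition val_witness :: "'g \<Rightarrow> 'k" where
  "val_witness g = (if g = 0 then 1 else SOME x. x \<noteq> 0 \<and> val x = g)"

lemma val_witness_nonzero [simp]: "val_witness g \<noteq> 0"
  using someI_ex[OF val_surj[of g]] by (simp add: val_witness_def)

lemma val_val_witness [simp]: "val (val_witness g) = g"
  using someI_ex[OF val_surj[of g]] by (simp add: val_witness_def)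

definition val_section :: "'g \<Rightarrow> 'k" where
  "val_section g =
     val_witness (class_rep g) * (val_witness (SOME c. g - class_rep g = c + c))\<^sup>2"

lemma val_section_nonzero: "val_section g \<noteq> 0"
  by (simp add: val_section_def)

lemma val_val_section [simp]: "val (val_section g) = g"
proof -
  let ?c = "SOME c. g - class_rep g = c + c"
  have "g - class_rep g = ?c + ?c"
    using class_rep_in_square_class[of g] by (auto simp: square_class_def intro: someI)
  then show ?thesis
    by (simp add: val_section_def val_mult val_power2 algebra_simps)
qed

lemma val_section_0 [simp]: "val_section 0 = 1"
  by (simp add: val_section_def val_witness_def)

lemma val_section_square_ratio:
  assumes "g - h = d + d"
  shows "\<exists>s. s \<noteq> 0 \<and> val_section g = s\<^sup>2 * val_section h"
proof -
  let ?w = val_witness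
  have "val_section g = (?w (SOME c. g - class_rep h = c + c)
      / ?w (SOME c. h - class_rep h = c + c))\<^sup>2 * val_section h"
    unfolding val_section_def class_rep_eq[OF assms] by (simp add: field_simps)
  then show ?thesis by (metis divide_eq_0_iff val_witness_nonzero)
qed

definition pseudo_ac :: "'k \<Rightarrow> 'f" where
  "pseudo_ac x = pi (x / val_section (val x))"

lemma val_unit_normalised: "x \<noteq> 0 \<Longrightarrow> val_unit val (x / val_section (val x))"
  by (simp add: val_unit_def val_section_nonzero val_divide)

lemma pseudo_ac_nonzero: "x \<noteq> 0 \<Longrightarrow> pseudo_ac x \<noteq> 0"
  unfolding pseudo_ac_def
  using val_unit_normalised val_unit_iff_res_nonzero val_unit_in_val_ring by blast

lemma pseudo_ac_val_unit: "val_unit val u \<Longrightarrow> pseudo_ac u = pi u"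
  by (simp add: val_unit_def pseudo_ac_def)

lemma pseudo_ac_mult_val_unit:
  assumes u: "val_unit val u" and x: "x \<noteq> 0"
  shows "pseudo_ac (u * x) = pi u * pseudo_ac x"
proof -
  have "val (u * x) = val x" using u x by (simp add: val_unit_def val_mult)
  then have "pseudo_ac (u * x) = pi (u * (x / val_section (val x)))"
    by (simp add: pseudo_ac_def)
  then show ?thesis
    using res_mult_val_unit[OF u val_unit_normalised[OF x]] by (simp add: pseudo_ac_def)
qed

lemma pseudo_ac_surj:
  assumes "c \<noteq> 0"
  shows "\<exists>w. w \<noteq> 0 \<and> val w = g \<and> pseudo_ac w = c"
proof -
  obtain b where b: "val_unit val b" "pi b = c" using res_lift[OF assms] by blast
  then have "b * val_section g \<noteq> 0" and v: "val (b * val_section g) = g"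
    by (simp_all add: val_unit_def val_section_nonzero val_mult)
  moreover have "pseudo_ac (b * val_section g) = c"
    using b by (simp add: pseudo_ac_def v val_section_nonzero)
  ultimately show ?thesis by blast
qed

lemma pseudo_ac_add_less:
  assumes x: "x1 \<noteq> 0" "x2 \<noteq> 0" "x1 + x2 \<noteq> 0" and less: "val x1 < val x2"
  shows "pseudo_ac (x1 + x2) = pseudo_ac x1"
proof -
  define z where "z = x2 / x1"
  have "0 < val z" using x less by (simp add: z_def val_divide)
  moreover from this have "z \<in> val_ring val" by (simp add: val_ring_def less_imp_le)
  ultimately have "pi z = 0" using res_eq_0_iff by blast
  then have one_z: "val_unit val (1 + z)" "pi (1 + z) = 1"
    using strict_unit_1_plus \<open>z \<in> val_ring val\<close> by (simp_all add: strict_unit_def)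
  have sum: "x1 + x2 = (1 + z) * x1" using x by (simp add: z_def field_simps)
  show ?thesis
    unfolding sum using pseudo_ac_mult_val_unit[OF one_z(1) x(1)] one_z(2) by simp
qed

lemma pseudo_ac_add_eq:
  assumes x: "x1 \<noteq> 0" "x2 \<noteq> 0" and eq: "val x1 = val x2"
    and nz: "pseudo_ac x1 + pseudo_ac x2 \<noteq> 0"
  shows "val (x1 + x2) = val x1 \<and> pseudo_ac (x1 + x2) = pseudo_ac x1 + pseudo_ac x2"
proof -
  define s where "s = val_section (val x1)"
  have s: "s \<noteq> 0" "val s = val x1" by (simp_all add: s_def val_section_nonzero)
  have e1: "val_unit val (x1 / s)" using val_unit_normalised[OF x(1)] by (simp add: s_def)
  have e2: "val_unit val (x2 / s)" using val_unit_normalised[OF x(2)] by (simp add: s_def eq)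
  have res: "pi (x1 / s) = pseudo_ac x1" "pi (x2 / s) = pseudo_ac x2"
    by (simp_all add: pseudo_ac_def s_def eq)
  have sum: "val_unit val (x1 / s + x2 / s) \<and> pi (x1 / s + x2 / s) = pseudo_ac x1 + pseudo_ac x2"
    using res_add_val_unit[OF val_unit_in_val_ring[OF e1] val_unit_in_val_ring[OF e2]] nz res
    by simp
  moreover have "x1 + x2 = (x1 / s + x2 / s) * s" using s by (simp add: field_simps)
  ultimately have "val (x1 + x2) = val x1" using s by (simp add: val_unit_def val_mult)
  moreover have "(x1 + x2) / s = x1 / s + x2 / s" by (simp add: add_divide_distrib)
  ultimately show ?thesis
    using sum by (simp add: pseudo_ac_def s_def)
qed

lemma pseudo_ac_eq_imp_square_multiple:
  assumes sqrt: "\<forall>u. strict_unit val pi u \<longrightarrow> (\<exists>y. y\<^sup>2 = u)"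
    and x: "x \<noteq> 0" "y \<noteq> 0" and d: "val x - val y = g + g"
    and eq: "pseudo_ac x = pseudo_ac y"
  shows "\<exists>u. u \<noteq> 0 \<and> y = u\<^sup>2 * x"
proof -
  obtain s where s: "s \<noteq> 0" "val_section (val x) = s\<^sup>2 * val_section (val y)"
    using val_section_square_ratio[OF d] by blast
  define ex where "ex = x / val_section (val x)"
  define ey where "ey = y / val_section (val y)"
  have ex: "val_unit val ex" and ey: "val_unit val ey"
    using val_unit_normalised x by (simp_all add: ex_def ey_def)
  define q where "q = ey / ex"
  have q: "val_unit val q" "ey = q * ex"
    using ex ey by (simp_all add: q_def val_unit_def val_divide)
  have "pi ex = pi ey" using eq by (simp add: pseudo_ac_def ex_def ey_def)
  moreover have "pi ex \<noteq> 0"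
    using ex val_unit_iff_res_nonzero val_unit_in_val_ring by blast
  ultimately have "pi q = 1" using res_mult_val_unit[OF q(1) ex] q(2) by simp
  with q obtain w where w: "w\<^sup>2 = q" using sqrt by (auto simp: strict_unit_def)
  have "y = (w / s)\<^sup>2 * x"
    using w q(2) s val_section_nonzero ex
    by (simp add: ex_def ey_def val_unit_def field_simps power2_eq_square)
  moreover have "w / s \<noteq> 0" using w q s by (auto simp: val_unit_def)
  ultimately show ?thesis by blast
qed

lemma pseudo_ac_mult_square:
  assumes a: "a \<noteq> 0" and u: "u \<noteq> 0"
  shows "\<exists>k. k \<noteq> 0 \<and> pseudo_ac (a * u\<^sup>2) = pseudo_ac a * k\<^sup>2"
proof -
  have val_au: "val (a * u\<^sup>2) = val a + (val u + val u)"
    using a u by (simp add: val_mult val_power2)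
  obtain s where s: "s \<noteq> 0" "val_section (val (a * u\<^sup>2)) = s\<^sup>2 * val_section (val a)"
    using val_section_square_ratio[of "val (a * u\<^sup>2)" "val a" "val u"] val_au by auto
  have "val a + (val u + val u) = (val s + val s) + val a"
    using arg_cong[OF s(2), of val] s val_section_nonzero val_au by (simp add: val_mult val_power2)
  then have "(val s - val u) + (val s - val u) = 0" by (simp add: algebra_simps)
  then have k: "val_unit val (u / s)"
    using u s by (simp add: val_unit_def val_divide)
  have "a * u\<^sup>2 / val_section (val (a * u\<^sup>2)) = (u / s)\<^sup>2 * (a / val_section (val a))"
    using s by (simp add: field_simps power2_eq_square)
  then have "pseudo_ac (a * u\<^sup>2) = pi (u / s) ^ 2 * pseudo_ac a"
    using res_mult_val_unit[OF val_unit_mult[OF k k] val_unit_normalised[OF a]]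
      res_mult_val_unit[OF k k] by (simp add: pseudo_ac_def power2_eq_square)
  moreover have "pi (u / s) \<noteq> 0"
    using k val_unit_iff_res_nonzero val_unit_in_val_ring by blast
  ultimately show ?thesis by (metis mult.commute)
qed

lemma pseudo_angular_component_pseudo_ac:
  assumes "\<forall>u. strict_unit val pi u \<longrightarrow> (\<exists>y. y\<^sup>2 = u)"
  shows "pseudo_angular_component val pi pseudo_ac"
  unfolding pseudo_angular_component_def
proof (intro conjI allI impI)
  fix x1 x2 :: 'k
  assume x: "x1 \<noteq> 0 \<and> x2 \<noteq> 0 \<and> x1 + x2 \<noteq> 0"
  show "pseudo_ac (x1 + x2) = pseudo_ac x1" if "val x1 < val x2"
    using pseudo_ac_add_less x that by blast
  assume "val x1 = val x2 \<and> pseudo_ac x1 + pseudo_ac x2 \<noteq> 0"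
  with x show "val (x1 + x2) = val x1" and "pseudo_ac (x1 + x2) = pseudo_ac x1 + pseudo_ac x2"
    using pseudo_ac_add_eq by blast+
qed (use pseudo_ac_nonzero pseudo_ac_val_unit pseudo_ac_mult_val_unit pseudo_ac_surj
      pseudo_ac_eq_imp_square_multiple[OF assms] pseudo_ac_mult_square in blast)+

end

theorem mainTheorem1:
  fixes val :: "'k::field \<Rightarrow> 'g::linordered_ab_group_add"
    and pi :: "'k \<Rightarrow> 'f::field"
  assumes "valued_field val pi"
    and "\<forall>u. strict_unit val pi u \<longrightarrow> (\<exists>y. y\<^sup>2 = u)"
  shows "\<exists>p :: 'k \<Rightarrow> 'f. pseudo_angular_component val pi p"
  using vfield.pseudo_angular_component_pseudo_ac[OF vfield.intro[OF assms(1)] assms(2)]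
  by blast

end
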